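(* Assume that $\sigma>0$ and $d>0$. Let $\zeta(\tau):=\frac{K}{b_e(T-\tau)}-1$ for $\tau\in(0,T]$. Then $\displaystyle\lim_{\tau\to0^+}\frac{\zeta(\tau)}{\sqrt\tau}=\infty$.
   Context: Let $(\Omega,\mathscr{F},\mathbb{F},\mathbb{P})$ be a complete filtered probability space. Fix $r\ge0$, $\delta\ge0$, $K>0$, $T>0$. Let $X$ be a Lévy process with Lévy triplet $(b,\sigma^2,\nu)$ such that: (i) $\sigma\neq0$, or $\nu((-\infty,0))>0$, or $\int_{(0,1]}z\,\nu(dz)=\infty$; (ii) $\sigma\neq0$, or $\nu((0,\infty))>0$, or $\int_{[-1,0)}|z|\,\nu(dz)=\infty$; (iii) $\int_1^\infty e^z\nu(dz)<\infty$ and $b=-\frac{\sigma^2}{2}-\int_{\mathbb{R}\setminus\{0\}}(e^z-1-z\mathbf 1_{\{|z|\le1\}})\nu(dz)$. The European put price is $P_e(t,s)=\mathbb{E}\big(e^{-r(T-t)}(K-se^{(r-\delta)(T-t)+X_{T-t}})^+\big)$ and $b_e(t)=\inf\{s\ge0:P_e(t,s)>(K-s)^+\}$. Define $d:=r-\delta-\int_{(0,\infty)}(e^z-1)\nu(dz)$. *)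

theory Defs
  imports "HOL-Probability.Probability"
begin

definition levy_measure :: "real measure \<Rightarrow> bool" where
  "levy_measure \<nu> \<longleftrightarrow> sets \<nu> = sets borel \<and> emeasure \<nu> {0} = 0 \<and>
     (\<integral>\<^sup>+ z. ennreal (min 1 (z\<^sup>2)) \<partial>\<nu>) < \<infinity>"

definition levy_exponent :: "real \<Rightarrow> real \<Rightarrow> real measure \<Rightarrow> real \<Rightarrow> complex" where
  "levy_exponent b \<sigma> \<nu> u =
     \<i> * complex_of_real (b * u) - complex_of_real (\<sigma>\<^sup>2 * u\<^sup>2 / 2)
     + (CLINT z|\<nu>. exp (\<i> * complex_of_real (u * z)) - 1
                     - \<i> * complex_of_real (u * z * indicator {-1..1} z))"

definition levy_process :: "'a measure \<Rightarrow> (real \<Rightarrow> 'a \<Rightarrow> real) \<Rightarrow> bool" where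
  "levy_process M X \<longleftrightarrow>
     prob_space M \<and>
     (\<forall>t\<ge>0. X t \<in> borel_measurable M) \<and>
     (\<forall>\<omega>\<in>space M. X 0 \<omega> = 0) \<and>
     (\<forall>(n::nat) (t::nat \<Rightarrow> real). 0 \<le> t 0 \<and> (\<forall>i<n. t i \<le> t (Suc i)) \<longrightarrow>
        prob_space.indep_vars M (\<lambda>_. borel) (\<lambda>i \<omega>. X (t (Suc i)) \<omega> - X (t i) \<omega>) {..<n}) \<and>
     (\<forall>s t. 0 \<le> s \<and> s \<le> t \<longrightarrow>
        distr M borel (\<lambda>\<omega>. X t \<omega> - X s \<omega>) = distr M borel (X (t - s))) \<and>
     (\<forall>t\<ge>0. \<forall>\<epsilon>>0. ((\<lambda>s. measure M {\<omega>\<in>space M. \<bar>X s \<omega> - X t \<omega>\<bar> > \<epsilon>}) \<longlongrightarrow> 0)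
                      (at t within {0..})) \<and>
     (AE \<omega> in M. \<forall>t\<ge>0. continuous (at_right t) (\<lambda>s. X s \<omega>) \<and>
                         (t > 0 \<longrightarrow> (\<exists>l. ((\<lambda>s. X s \<omega>) \<longlongrightarrow> l) (at_left t))))"

definition levy_process_triplet ::
    "'a measure \<Rightarrow> (real \<Rightarrow> 'a \<Rightarrow> real) \<Rightarrow> real \<Rightarrow> real \<Rightarrow> real measure \<Rightarrow> bool" where
  "levy_process_triplet M X b \<sigma> \<nu> \<longleftrightarrow>
     levy_process M X \<and> levy_measure \<nu> \<and>
     (\<forall>t\<ge>0. \<forall>u. char (distr M borel (X t)) u = exp (complex_of_real t * levy_exponent b \<sigma> \<nu> u))"

definition put_price ::
    "'a measure \<Rightarrow> (real \<Rightarrow> 'a \<Rightarrow> real) \<Rightarrow> real \<Rightarrow> real \<Rightarrow> real \<Rightarrow> real \<Rightarrow> real \<Rightarrow> real \<Rightarrow> real" where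
  "put_price M X r \<delta> K T t s =
     (\<integral>\<omega>. exp (- r * (T - t)) * max 0 (K - s * exp ((r - \<delta>) * (T - t) + X (T - t) \<omega>)) \<partial>M)"

definition put_boundary ::
    "'a measure \<Rightarrow> (real \<Rightarrow> 'a \<Rightarrow> real) \<Rightarrow> real \<Rightarrow> real \<Rightarrow> real \<Rightarrow> real \<Rightarrow> real \<Rightarrow> real" where
  "put_boundary M X r \<delta> K T t = Inf {s. 0 \<le> s \<and> put_price M X r \<delta> K T t s > max 0 (K - s)}"

text \<open>d = r - delta - int_{(0,oo)} (e^z - 1) nu(dz), as an extended real
  (the integrand is nonnegative; d = -oo if the integral diverges).\<close>
definition levy_d :: "real \<Rightarrow> real \<Rightarrow> real measure \<Rightarrow> ereal" where
  "levy_d r \<delta> \<nu> = ereal (r - \<delta>) - enn2ereal (\<integral>\<^sup>+ z. ennreal (exp z - 1) * indicator {0<..} z \<partial>\<nu>)"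

end

theory Submission
  imports Defs
begin

(*
  Fix c > 0, write t = sqrt tau and consider the stock price s = K (1 - c t). For small t the
  rescaled put payoff (1 - (1 - c t) exp ((r - delta) t^2 + t y))^+ dominates
  t (min (3c) ((c - y)^+) - eps) uniformly in y, hence
  P_e(T - tau, s) >= e^(-r tau) K t (E min (3c) ((c - X_tau / t)^+) - eps).
  Since sigma > 0, the Levy exponent shows that X_tau / sqrt tau converges weakly to N(0, sigma^2)
  as tau -> 0 (after rescaling, the jump part of the exponent vanishes by dominated convergence),
  and by the symmetry of the Gaussian E min (3c) ((c - sigma Z)^+) > c. So eventually
  P_e(T - tau, s) > K c t = (K - s)^+, i.e. b_e(T - tau) <= K (1 - c sqrt tau) and
  zeta(tau) >= c sqrt tau. The hypothesis d > 0 is used only through r > 0, which keeps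
  b_e(T - tau) >= K (1 - e^(-r tau)) > 0.
*)

lemma exp_le_one_plus_self_plus_square:
  fixes x :: real
  assumes "\<bar>x\<bar> \<le> 1"
  shows "exp x \<le> 1 + x + x\<^sup>2"
proof (cases "x \<ge> 0")
  case True
  then show ?thesis using exp_bound[of x] assms by auto
next
  case False
  have "exp x * (1 - x) \<le> 1"
    using exp_ge_add_one_self[of "-x"] False by (simp add: exp_minus field_simps)
  moreover have "1 \<le> (1 - x) * (1 + x + x\<^sup>2)"
  proof -
    have "(1 - x) * (1 + x + x\<^sup>2) = 1 - x * x\<^sup>2" by (simp add: algebra_simps power2_eq_square)
    moreover have "x * x\<^sup>2 \<le> 0" using False by (simp add: mult_nonpos_nonneg)
    ultimately show ?thesis by simp
  qed
  ultimately have "exp x * 1 \<le> exp x * ((1 - x) * (1 + x + x\<^sup>2))"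
    by (intro mult_left_mono) auto
  also have "\<dots> = (exp x * (1 - x)) * (1 + x + x\<^sup>2)" by (simp only: mult.assoc)
  also have "\<dots> \<le> 1 + x + x\<^sup>2"
    using \<open>exp x * (1 - x) \<le> 1\<close> assms False by (intro mult_left_le_one_le) auto
  finally show ?thesis by simp
qed

text \<open>The cap makes the function bounded, as weak convergence requires; at level 3c it is still
  high enough for the Gaussian mean to exceed c.\<close>
definition capped_hinge :: "real \<Rightarrow> real \<Rightarrow> real" where
  "capped_hinge c y = min (3 * c) (max 0 (c - y))"

lemma abs_capped_hinge_le: "0 \<le> c \<Longrightarrow> \<bar>capped_hinge c y\<bar> \<le> 3 * c"
  by (simp add: capped_hinge_def)

lemma isCont_capped_hinge: "isCont (capped_hinge c) y"
  unfolding capped_hinge_def by (intro continuous_intros)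

lemma borel_measurable_capped_hinge [measurable]: "capped_hinge c \<in> borel_measurable borel"
  unfolding capped_hinge_def by measurable

lemma capped_hinge_reflect_ge:
  "0 < c \<Longrightarrow> 2 * c + c * indicator {2 * c..} y \<le> capped_hinge c y + capped_hinge c (- y)"
  by (auto simp: capped_hinge_def indicator_def)

lemma put_payoff_linear_lower_bound:
  fixes a c t y \<epsilon> :: real
  defines "B \<equiv> \<bar>a\<bar> + 3 * c"
  assumes c: "0 < c" and t: "0 < t" "t \<le> 1" "c * t \<le> 1" "t * B \<le> 1"
    and t_small: "t * (\<bar>a\<bar> + B\<^sup>2 + c * B) \<le> \<epsilon>" and y: "\<bar>y\<bar> \<le> 3 * c"
  shows "t * (c - y - \<epsilon>) \<le> 1 - (1 - c * t) * exp (a * t\<^sup>2 + t * y)"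
proof -
  define x where "x = a * t\<^sup>2 + t * y"
  have "\<bar>a * t\<^sup>2\<bar> \<le> \<bar>a\<bar> * t"
    using t by (simp add: abs_mult power2_eq_square mult_left_le_one_le mult_left_mono)
  moreover have "\<bar>t * y\<bar> \<le> t * (3 * c)" using t y by (simp add: abs_mult)
  ultimately have x_le: "\<bar>x\<bar> \<le> t * B" unfolding x_def B_def by (simp add: algebra_simps)
  have "(1 - c * t) * exp x \<le> (1 - c * t) * (1 + x + x\<^sup>2)"
    using exp_le_one_plus_self_plus_square[of x] x_le t by (intro mult_left_mono) auto
  also have "\<dots> = 1 - c * t + x + x\<^sup>2 - c * t * x - c * t * x\<^sup>2" by (simp add: algebra_simps)
  also have "\<dots> \<le> 1 - c * t + (t * y + \<bar>a\<bar> * t\<^sup>2) + (t * B)\<^sup>2 + c * t * (t * B)"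
  proof -
    have "x \<le> t * y + \<bar>a\<bar> * t\<^sup>2" unfolding x_def by (simp add: mult_right_mono)
    moreover have "x\<^sup>2 \<le> (t * B)\<^sup>2" using x_le by (metis abs_ge_zero power2_abs power_mono)
    moreover have "- (c * t * x) \<le> c * t * (t * B)"
      using x_le c t by (intro mult_left_mono[of "- x", simplified]) auto
    moreover have "0 \<le> c * t * x\<^sup>2" using c t by simp
    ultimately show ?thesis by linarith
  qed
  also have "\<dots> = 1 - c * t + t * y + t * (t * (\<bar>a\<bar> + B\<^sup>2 + c * B))"
    by (simp add: algebra_simps power2_eq_square)
  also have "\<dots> \<le> 1 - c * t + t * y + t * \<epsilon>"
    using t_small t by (simp add: mult_left_mono)
  finally show ?thesis unfolding x_def by (simp add: algebra_simps)
qed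

lemma eventually_capped_hinge_le_put_payoff:
  fixes a c \<epsilon> :: real
  assumes c: "0 < c" and \<epsilon>: "0 < \<epsilon>"
  shows "\<forall>\<^sub>F t in at_right 0. \<forall>y.
           t * (capped_hinge c y - \<epsilon>) \<le> max 0 (1 - (1 - c * t) * exp (a * t\<^sup>2 + t * y))"
proof -
  define B where "B = \<bar>a\<bar> + 3 * c"
  define L where "L = \<bar>a\<bar> + B\<^sup>2 + c * B"
  have B: "0 < B" and L: "0 < L" using c by (auto simp: B_def L_def add_nonneg_pos)
  define t0 where "t0 = min 1 (min (1 / c) (min (1 / B) (\<epsilon> / L)))"
  have "0 < t0" using c B L \<epsilon> by (simp add: t0_def)
  from eventually_at_right_real[OF this] show ?thesis
  proof (rule eventually_mono)
    fix t assume "t \<in> {0<..<t0}"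
    then have t: "0 < t" "t \<le> 1" "c * t \<le> 1" "t * B \<le> 1" "t * L \<le> \<epsilon>"
      using c B L by (auto simp: t0_def field_simps)
    have linear: "t * (c - y - \<epsilon>) \<le> 1 - (1 - c * t) * exp (a * t\<^sup>2 + t * y)"
      if "\<bar>y\<bar> \<le> 3 * c" for y
      using put_payoff_linear_lower_bound[OF c t(1-3)] t(4,5) that by (simp add: B_def L_def)
    show "\<forall>y. t * (capped_hinge c y - \<epsilon>) \<le> max 0 (1 - (1 - c * t) * exp (a * t\<^sup>2 + t * y))"
    proof
      fix y
      consider "c \<le> y" | "- 2 * c \<le> y" "y < c" | "y < - 2 * c" by linarith
      then show "t * (capped_hinge c y - \<epsilon>) \<le> max 0 (1 - (1 - c * t) * exp (a * t\<^sup>2 + t * y))"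
      proof cases
        case 1
        then have "t * (capped_hinge c y - \<epsilon>) \<le> 0"
          using c t \<epsilon> by (simp add: capped_hinge_def mult_nonneg_nonpos)
        then show ?thesis by linarith
      next
        case 2
        then have "capped_hinge c y = c - y" "\<bar>y\<bar> \<le> 3 * c" by (auto simp: capped_hinge_def)
        then show ?thesis using linear[of y] by simp
      next
        case 3
        \<comment> \<open>below -2c the payoff only grows while the capped hinge stays at 3c\<close>
        have "(1 - c * t) * exp (a * t\<^sup>2 + t * y) \<le> (1 - c * t) * exp (a * t\<^sup>2 + t * (- 2 * c))"
          using 3 t mult_left_mono[of y "- 2 * c" t] by (intro mult_left_mono) auto
        then show ?thesis using linear[of "- 2 * c"] 3 c by (simp add: capped_hinge_def)
      qed
    qed
  qed
qed

lemma std_normal_integral_reflect: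
  fixes f :: "real \<Rightarrow> real"
  assumes [measurable]: "f \<in> borel_measurable borel"
  shows "(\<integral>x. f (- x) \<partial>std_normal_distribution) = (\<integral>x. f x \<partial>std_normal_distribution)"
proof -
  have "(\<integral>x. f (- x) \<partial>std_normal_distribution) = (\<integral>x. std_normal_density x * f (- x) \<partial>lborel)"
    by (subst integral_density) auto
  also have "\<dots> = (\<integral>x. std_normal_density x * f x \<partial>lborel)"
    by (subst lborel_integral_real_affine[where c = "-1" and t = 0]) (auto simp: std_normal_density_def)
  also have "\<dots> = (\<integral>x. f x \<partial>std_normal_distribution)"
    by (subst integral_density) auto
  finally show ?thesis .
qed

lemma std_normal_tail_pos: "0 < measure std_normal_distribution {a..}"
proof -
  interpret N: real_distribution std_normal_distribution by (rule real_dist_normal_dist)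
  define S where "S = {\<bar>a\<bar>..\<bar>a\<bar> + 1}"
  define m where "m = (1 / sqrt (2 * pi)) * exp (- (\<bar>a\<bar> + 1)\<^sup>2 / 2)"
  have "ennreal m * indicator S x \<le> ennreal (std_normal_density x) * indicator S x" for x
  proof (cases "x \<in> S")
    case True
    then have "x\<^sup>2 \<le> (\<bar>a\<bar> + 1)\<^sup>2" by (intro power_mono) (auto simp: S_def)
    then show ?thesis using True by (auto simp: m_def std_normal_density_def intro!: divide_right_mono)
  qed simp
  then have "(\<integral>\<^sup>+x. ennreal m * indicator S x \<partial>lborel) \<le> emeasure std_normal_distribution S"
    by (subst emeasure_density) (auto simp: S_def intro: nn_integral_mono)
  moreover have "(\<integral>\<^sup>+x. ennreal m * indicator S x \<partial>lborel) = ennreal m"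
    by (simp add: S_def nn_integral_cmult_indicator)
  moreover have "0 < m" by (simp add: m_def)
  ultimately have "0 < measure std_normal_distribution S"
    by (simp add: N.emeasure_eq_measure)
  also have "\<dots> \<le> measure std_normal_distribution {a..}"
    by (intro N.finite_measure_mono) (auto simp: S_def)
  finally show ?thesis .
qed

lemma std_normal_capped_hinge_mean_gt:
  assumes c: "0 < c" and \<sigma>: "0 < \<sigma>"
  shows "c < (\<integral>x. capped_hinge c (\<sigma> * x) \<partial>std_normal_distribution)"
proof -
  interpret N: real_distribution std_normal_distribution by (rule real_dist_normal_dist)
  let ?g = "\<lambda>x. capped_hinge c (\<sigma> * x)"
  have bounded: "integrable std_normal_distribution f"
    if [measurable]: "f \<in> borel_measurable borel" and "\<And>x. \<bar>f x\<bar> \<le> B"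
    for f :: "real \<Rightarrow> real" and B
    using that by (intro N.integrable_const_bound[where B = B]) auto
  have [simp]: "integrable std_normal_distribution ?g"
    "integrable std_normal_distribution (\<lambda>x. capped_hinge c (- (\<sigma> * x)))"
    using c by (auto intro!: bounded abs_capped_hinge_le)
  have [simp]: "integrable std_normal_distribution (indicator {2 * c / \<sigma>..} :: real \<Rightarrow> real)"
    by (auto intro!: bounded[of _ 1])
  have "2 * c + c * measure std_normal_distribution {2 * c / \<sigma>..}
      = (\<integral>x. 2 * c + c * indicator {2 * c / \<sigma>..} x \<partial>std_normal_distribution)"
    using N.prob_space by simp
  also have "\<dots> \<le> (\<integral>x. ?g x + ?g (- x) \<partial>std_normal_distribution)"
  proof (intro integral_mono)
    fix x
    have "indicator {2 * c / \<sigma>..} x = (indicator {2 * c..} (\<sigma> * x) :: real)"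
      using \<sigma> by (simp add: indicator_def field_simps)
    then show "2 * c + c * indicator {2 * c / \<sigma>..} x \<le> ?g x + ?g (- x)"
      using capped_hinge_reflect_ge[OF c, of "\<sigma> * x"] by simp
  qed auto
  also have "\<dots> = 2 * (\<integral>x. ?g x \<partial>std_normal_distribution)"
    using std_normal_integral_reflect[of ?g] by simp
  finally show ?thesis
    using mult_pos_pos[OF c std_normal_tail_pos[of "2 * c / \<sigma>"]] by linarith
qed

definition levy_jump_integrand :: "real \<Rightarrow> real \<Rightarrow> complex" where
  "levy_jump_integrand u z = iexp (u * z) - 1 - \<i> * complex_of_real (u * z * indicator {-1..1} z)"

lemma levy_exponent_eq:
  "levy_exponent b \<sigma> \<nu> u = \<i> * complex_of_real (b * u) - complex_of_real (\<sigma>\<^sup>2 * u\<^sup>2 / 2)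
     + (CLINT z|\<nu>. levy_jump_integrand u z)"
  by (simp add: levy_exponent_def levy_jump_integrand_def)

lemma norm_levy_jump_integrand_le: "cmod (levy_jump_integrand u z) \<le> 2 + \<bar>u\<bar> * \<bar>z\<bar>"
proof -
  have "cmod (iexp (u * z) - 1) \<le> 2" using iexp_approx2[of "u * z" 0] by simp
  moreover have "cmod (\<i> * complex_of_real (u * z * indicator {-1..1} z)) \<le> \<bar>u\<bar> * \<bar>z\<bar>"
    by (simp add: norm_mult abs_mult indicator_def)
  ultimately show ?thesis
    unfolding levy_jump_integrand_def by (smt (verit) norm_triangle_ineq4)
qed

lemma norm_levy_jump_integrand_le_min:
  "cmod (levy_jump_integrand u z) \<le> (u\<^sup>2 / 2 + 2) * min 1 (z\<^sup>2)"
proof (cases "\<bar>z\<bar> \<le> 1")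
  case True
  then have "levy_jump_integrand u z = iexp (u * z) - 1 - \<i> * complex_of_real (u * z)"
    by (simp add: levy_jump_integrand_def indicator_def abs_le_iff)
  then have "cmod (levy_jump_integrand u z) \<le> u\<^sup>2 / 2 * z\<^sup>2"
    using iexp_approx1[of "u * z" 1] by (simp add: power2_eq_square diff_diff_eq mult_ac)
  moreover have "min 1 (z\<^sup>2) = z\<^sup>2" using True by (simp add: abs_square_le_1)
  ultimately show ?thesis by (simp add: distrib_right add_increasing2)
next
  case False
  then have "levy_jump_integrand u z = iexp (u * z) - 1"
    by (auto simp: levy_jump_integrand_def indicator_def abs_le_iff)
  then have "cmod (levy_jump_integrand u z) \<le> 2" using iexp_approx2[of "u * z" 0] by simp
  moreover have "min 1 (z\<^sup>2) = 1" using False abs_square_le_1[of z] by simp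
  ultimately show ?thesis by (simp add: add_increasing)
qed

lemma levy_jump_integral_small_time:
  assumes \<nu>: "levy_measure \<nu>" and t: "\<And>n. 0 < t n" "\<And>n. t n \<le> 1" "t \<longlonglongrightarrow> 0"
  shows "(\<lambda>n. complex_of_real (t n) * (CLINT z|\<nu>. levy_jump_integrand (u / sqrt (t n)) z)) \<longlonglongrightarrow> 0"
proof -
  have borel_\<nu>: "borel_measurable \<nu> = borel_measurable borel"
    using \<nu> by (intro measurable_cong_sets) (auto simp: levy_measure_def)
  define w where "w z = (u\<^sup>2 / 2 + 2) * min 1 (z\<^sup>2)" for z :: real
  have "integrable \<nu> (\<lambda>z. min 1 (z\<^sup>2) :: real)"
    using \<nu> by (intro integrableI_bounded) (auto simp: levy_measure_def borel_\<nu>)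
  then have "integrable \<nu> w" unfolding w_def by (rule integrable_mult_right)
  moreover have "(\<lambda>n. complex_of_real (t n) * levy_jump_integrand (u / sqrt (t n)) z) \<longlonglongrightarrow> 0" for z
  proof (rule Lim_null_comparison)
    have "norm (complex_of_real (t n) * levy_jump_integrand (u / sqrt (t n)) z)
        \<le> t n * (2 + \<bar>u / sqrt (t n)\<bar> * \<bar>z\<bar>)" for n
      using t(1)[of n] norm_levy_jump_integrand_le[of "u / sqrt (t n)" z]
      by (simp add: norm_mult mult_left_mono)
    also have "t n * (2 + \<bar>u / sqrt (t n)\<bar> * \<bar>z\<bar>) = 2 * t n + \<bar>u\<bar> * \<bar>z\<bar> * sqrt (t n)" for n
      using t(1)[of n] by (simp add: abs_div field_simps real_div_sqrt)
    finally show "\<forall>\<^sub>F n in sequentially. norm (complex_of_real (t n) * levy_jump_integrand (u / sqrt (t n)) z)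
        \<le> 2 * t n + \<bar>u\<bar> * \<bar>z\<bar> * sqrt (t n)"
      by simp
    show "(\<lambda>n. 2 * t n + \<bar>u\<bar> * \<bar>z\<bar> * sqrt (t n)) \<longlonglongrightarrow> 0"
      using t(3) by (auto intro!: tendsto_eq_intros)
  qed
  moreover have "norm (complex_of_real (t n) * levy_jump_integrand (u / sqrt (t n)) z) \<le> w z" for n z
  proof -
    have "norm (complex_of_real (t n) * levy_jump_integrand (u / sqrt (t n)) z)
        \<le> t n * (((u / sqrt (t n))\<^sup>2 / 2 + 2) * min 1 (z\<^sup>2))"
      using t(1)[of n] norm_levy_jump_integrand_le_min by (simp add: norm_mult mult_left_mono)
    also have "\<dots> = (u\<^sup>2 / 2 + 2 * t n) * min 1 (z\<^sup>2)"
      using t(1)[of n] by (simp add: field_simps)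
    also have "\<dots> \<le> w z"
      unfolding w_def using t(2)[of n] by (intro mult_right_mono) auto
    finally show ?thesis .
  qed
  ultimately have "(\<lambda>n. CLINT z|\<nu>. complex_of_real (t n) * levy_jump_integrand (u / sqrt (t n)) z)
      \<longlonglongrightarrow> (CLINT z|\<nu>. 0)"
    by (intro integral_dominated_convergence[where w = w])
       (auto simp: borel_\<nu> levy_jump_integrand_def)
  then show ?thesis by simp
qed

lemma levy_exponent_small_time:
  assumes \<nu>: "levy_measure \<nu>" and \<sigma>: "0 < \<sigma>"
    and t: "\<And>n. 0 < t n" "\<And>n. t n \<le> 1" "t \<longlonglongrightarrow> 0"
  shows "(\<lambda>n. complex_of_real (t n) * levy_exponent b \<sigma> \<nu> (u / (\<sigma> * sqrt (t n))))
           \<longlonglongrightarrow> - complex_of_real (u\<^sup>2 / 2)"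
proof -
  define v where "v = u / \<sigma>"
  have "complex_of_real (t n) * levy_exponent b \<sigma> \<nu> (u / (\<sigma> * sqrt (t n)))
      = \<i> * complex_of_real (b * v * sqrt (t n)) - complex_of_real (u\<^sup>2 / 2)
        + complex_of_real (t n) * (CLINT z|\<nu>. levy_jump_integrand (v / sqrt (t n)) z)" for n
  proof -
    define w where "w = v / sqrt (t n)"
    have "u / (\<sigma> * sqrt (t n)) = w" by (simp add: v_def w_def)
    moreover have "t n * (b * w) = b * v * sqrt (t n)"
      using t(1)[of n] by (simp add: w_def field_simps real_div_sqrt)
    moreover have "t n * (\<sigma>\<^sup>2 * w\<^sup>2 / 2) = u\<^sup>2 / 2"
      using t(1)[of n] \<sigma> by (simp add: w_def v_def field_simps)
    moreover have "complex_of_real (t n) * levy_exponent b \<sigma> \<nu> w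
        = \<i> * complex_of_real (t n * (b * w)) - complex_of_real (t n * (\<sigma>\<^sup>2 * w\<^sup>2 / 2))
          + complex_of_real (t n) * (CLINT z|\<nu>. levy_jump_integrand w z)"
      unfolding levy_exponent_eq by (simp add: algebra_simps)
    ultimately show ?thesis by (simp only: w_def)
  qed
  moreover have "(\<lambda>n. \<i> * complex_of_real (b * v * sqrt (t n)) - complex_of_real (u\<^sup>2 / 2)
        + complex_of_real (t n) * (CLINT z|\<nu>. levy_jump_integrand (v / sqrt (t n)) z))
      \<longlonglongrightarrow> \<i> * complex_of_real (b * v * sqrt 0) - complex_of_real (u\<^sup>2 / 2) + 0"
    by (intro tendsto_intros levy_jump_integral_small_time[OF \<nu> t] t(3))
  ultimately show ?thesis by simp
qed

lemma char_distr_divide: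
  assumes [measurable]: "Y \<in> borel_measurable M"
  shows "char (distr M borel (\<lambda>\<omega>. Y \<omega> / k)) u = char (distr M borel Y) (u / k)"
  unfolding char_def by (simp add: integral_distr field_simps)

lemma levy_small_time_clt:
  assumes levy: "levy_process_triplet M X b \<sigma> \<nu>" and \<sigma>: "0 < \<sigma>"
    and t: "\<And>n. 0 < t n" "\<And>n. t n \<le> 1" "t \<longlonglongrightarrow> 0"
  shows "weak_conv_m (\<lambda>n. distr M borel (\<lambda>\<omega>. X (t n) \<omega> / (\<sigma> * sqrt (t n))))
           std_normal_distribution"
proof (rule levy_continuity)
  have "prob_space M" and X: "\<And>s. 0 \<le> s \<Longrightarrow> X s \<in> borel_measurable M"
    using levy by (auto simp: levy_process_triplet_def levy_process_def)
  then show "real_distribution (distr M borel (\<lambda>\<omega>. X (t n) \<omega> / (\<sigma> * sqrt (t n))))" for n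
    using t(1)[of n] by (intro prob_space.real_distribution_distr) auto
  show "real_distribution std_normal_distribution" by (rule real_dist_normal_dist)
  fix u
  have "char (distr M borel (\<lambda>\<omega>. X (t n) \<omega> / (\<sigma> * sqrt (t n)))) u
      = exp (complex_of_real (t n) * levy_exponent b \<sigma> \<nu> (u / (\<sigma> * sqrt (t n))))" for n
    using levy t(1)[of n] X[of "t n"]
    by (simp add: char_distr_divide levy_process_triplet_def less_imp_le)
  moreover have "levy_measure \<nu>" using levy by (simp add: levy_process_triplet_def)
  then have "(\<lambda>n. exp (complex_of_real (t n) * levy_exponent b \<sigma> \<nu> (u / (\<sigma> * sqrt (t n)))))
      \<longlonglongrightarrow> exp (- complex_of_real (u\<^sup>2 / 2))"
    by (intro tendsto_exp levy_exponent_small_time \<sigma> t)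
  ultimately show "(\<lambda>n. char (distr M borel (\<lambda>\<omega>. X (t n) \<omega> / (\<sigma> * sqrt (t n)))) u)
      \<longlonglongrightarrow> char std_normal_distribution u"
    by (simp add: char_std_normal_distribution flip: exp_of_real)
qed

lemma levy_small_time_expectation:
  fixes f :: "real \<Rightarrow> real"
  assumes levy: "levy_process_triplet M X b \<sigma> \<nu>" and \<sigma>: "0 < \<sigma>"
    and f: "\<And>x. isCont f x" "\<And>x. \<bar>f x\<bar> \<le> B"
  shows "((\<lambda>\<tau>. \<integral>\<omega>. f (X \<tau> \<omega> / sqrt \<tau>) \<partial>M) \<longlongrightarrow> (\<integral>x. f (\<sigma> * x) \<partial>std_normal_distribution))
           (at_right 0)"
proof (rule tendsto_at_right_sequentially[of 0 1])
  fix t :: "nat \<Rightarrow> real"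
  assume t: "\<And>n. 0 < t n" "\<And>n. t n < 1" "decseq t" "t \<longlonglongrightarrow> 0"
  have "prob_space M" and X: "\<And>s. 0 \<le> s \<Longrightarrow> X s \<in> borel_measurable M"
    using levy by (auto simp: levy_process_triplet_def levy_process_def)
  let ?\<mu> = "\<lambda>n. distr M borel (\<lambda>\<omega>. X (t n) \<omega> / (\<sigma> * sqrt (t n)))"
  have "(\<lambda>n. \<integral>x. f (\<sigma> * x) \<partial>?\<mu> n) \<longlonglongrightarrow> (\<integral>x. f (\<sigma> * x) \<partial>std_normal_distribution)"
  proof (rule weak_conv_imp_integral_bdd_continuous_conv)
    show "real_distribution (?\<mu> n)" for n
      using \<open>prob_space M\<close> X[of "t n"] t(1)[of n]
      by (intro prob_space.real_distribution_distr) auto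
    show "weak_conv_m ?\<mu> std_normal_distribution"
      using levy \<sigma> t by (intro levy_small_time_clt) (auto intro: less_imp_le)
    show "isCont (\<lambda>x. f (\<sigma> * x)) x" for x
      by (rule isCont_o2[OF _ f(1)]) (intro continuous_intros)
  qed (use f(2) real_dist_normal_dist in auto)
  moreover have "(\<integral>x. f (\<sigma> * x) \<partial>?\<mu> n) = (\<integral>\<omega>. f (X (t n) \<omega> / sqrt (t n)) \<partial>M)" for n
  proof -
    have [measurable]: "X (t n) \<in> borel_measurable M" using X t(1)[of n] by (simp add: less_imp_le)
    have [measurable]: "f \<in> borel_measurable borel"
      using f(1) by (intro borel_measurable_continuous_onI continuous_at_imp_continuous_on) auto
    show ?thesis using \<sigma> by (simp add: integral_distr)
  qed
  ultimately show "(\<lambda>n. \<integral>\<omega>. f (X (t n) \<omega> / sqrt (t n)) \<partial>M)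
      \<longlonglongrightarrow> (\<integral>x. f (\<sigma> * x) \<partial>std_normal_distribution)"
    by simp
qed simp

lemma integrable_put_payoff:
  fixes X :: "real \<Rightarrow> 'a \<Rightarrow> real" and r \<delta> K T t s :: real
  assumes "prob_space M" and [measurable]: "X (T - t) \<in> borel_measurable M" and "0 \<le> s"
  shows "integrable M (\<lambda>\<omega>. exp (- r * (T - t)) * max 0 (K - s * exp ((r - \<delta>) * (T - t) + X (T - t) \<omega>)))"
proof -
  interpret prob_space M by fact
  have "max 0 (K - s * exp z) \<le> \<bar>K\<bar>" for z
  proof -
    have "0 \<le> s * exp z" using \<open>0 \<le> s\<close> by simp
    then show ?thesis by linarith
  qed
  then show ?thesis
    by (intro integrable_const_bound[where B = "exp (- r * (T - t)) * \<bar>K\<bar>"])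
       (auto simp: abs_mult intro!: mult_left_mono)
qed

lemma put_price_le:
  assumes "prob_space M" and "X (T - t) \<in> borel_measurable M" and "0 \<le> s" and "0 \<le> K"
  shows "put_price M X r \<delta> K T t s \<le> exp (- r * (T - t)) * K"
  unfolding put_price_def using assms
  by (intro prob_space.integral_le_const integrable_put_payoff) (auto intro!: mult_left_mono)

lemma put_boundary_le:
  assumes "0 \<le> s" and "max 0 (K - s) < put_price M X r \<delta> K T t s"
  shows "put_boundary M X r \<delta> K T t \<le> s"
  unfolding put_boundary_def using assms by (intro cInf_lower bdd_belowI[of _ 0]) auto

lemma put_boundary_ge:
  assumes "prob_space M" and "X (T - t) \<in> borel_measurable M" and "0 \<le> K"
    and "0 \<le> s" and "max 0 (K - s) < put_price M X r \<delta> K T t s"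
  shows "K * (1 - exp (- r * (T - t))) \<le> put_boundary M X r \<delta> K T t"
  unfolding put_boundary_def
proof (rule cInf_greatest)
  show "{s. 0 \<le> s \<and> max 0 (K - s) < put_price M X r \<delta> K T t s} \<noteq> {}" using assms(4,5) by auto
  fix s' assume "s' \<in> {s. 0 \<le> s \<and> max 0 (K - s) < put_price M X r \<delta> K T t s}"
  then show "K * (1 - exp (- r * (T - t))) \<le> s'"
    using put_price_le[where M = M and X = X and r = r and \<delta> = \<delta> and K = K and T = T and t = t
        and s = s'] assms(1-3) by (auto simp: algebra_simps)
qed

lemma put_price_ge_capped_hinge_mean:
  fixes X :: "real \<Rightarrow> 'a \<Rightarrow> real"
  assumes "prob_space M" and [measurable]: "X \<tau> \<in> borel_measurable M"
    and \<tau>: "0 < \<tau>" and K: "0 < K" and c: "0 \<le> c" "c * sqrt \<tau> \<le> 1"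
    and payoff: "\<And>y. sqrt \<tau> * (capped_hinge c y - \<epsilon>)
                   \<le> max 0 (1 - (1 - c * sqrt \<tau>) * exp ((r - \<delta>) * \<tau> + sqrt \<tau> * y))"
  shows "exp (- r * \<tau>) * K * sqrt \<tau> * ((\<integral>\<omega>. capped_hinge c (X \<tau> \<omega> / sqrt \<tau>) \<partial>M) - \<epsilon>)
           \<le> put_price M X r \<delta> K T (T - \<tau>) (K * (1 - c * sqrt \<tau>))"
proof -
  interpret prob_space M by fact
  let ?s = "K * (1 - c * sqrt \<tau>)"
  have "integrable M (\<lambda>\<omega>. capped_hinge c (X \<tau> \<omega> / sqrt \<tau>))"
    using c by (intro integrable_const_bound[where B = "3 * c"]) (auto intro: abs_capped_hinge_le)
  then have "exp (- r * \<tau>) * K * sqrt \<tau> * ((\<integral>\<omega>. capped_hinge c (X \<tau> \<omega> / sqrt \<tau>) \<partial>M) - \<epsilon>)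
      = (\<integral>\<omega>. exp (- r * \<tau>) * K * (sqrt \<tau> * (capped_hinge c (X \<tau> \<omega> / sqrt \<tau>) - \<epsilon>)) \<partial>M)"
    by (simp add: prob_space algebra_simps)
  also have "\<dots> \<le> (\<integral>\<omega>. exp (- r * \<tau>) * max 0 (K - ?s * exp ((r - \<delta>) * \<tau> + X \<tau> \<omega>)) \<partial>M)"
  proof (rule integral_mono)
    show "integrable M (\<lambda>\<omega>. exp (- r * \<tau>) * max 0 (K - ?s * exp ((r - \<delta>) * \<tau> + X \<tau> \<omega>)))"
      using integrable_put_payoff[where M = M and X = X and T = T and t = "T - \<tau>" and s = ?s]
        \<open>prob_space M\<close> K c by simp
    fix \<omega>
    have "K * (sqrt \<tau> * (capped_hinge c (X \<tau> \<omega> / sqrt \<tau>) - \<epsilon>))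
        \<le> K * max 0 (1 - (1 - c * sqrt \<tau>) * exp ((r - \<delta>) * \<tau> + X \<tau> \<omega>))"
      using payoff[of "X \<tau> \<omega> / sqrt \<tau>"] K \<tau> by (intro mult_left_mono) auto
    also have "\<dots> = max 0 (K - ?s * exp ((r - \<delta>) * \<tau> + X \<tau> \<omega>))"
      using K by (simp add: max_mult_distrib_left algebra_simps)
    finally show "exp (- r * \<tau>) * K * (sqrt \<tau> * (capped_hinge c (X \<tau> \<omega> / sqrt \<tau>) - \<epsilon>))
        \<le> exp (- r * \<tau>) * max 0 (K - ?s * exp ((r - \<delta>) * \<tau> + X \<tau> \<omega>))"
      by (simp add: mult.assoc)
  qed (use \<open>integrable M _\<close> in simp)
  also have "\<dots> = put_price M X r \<delta> K T (T - \<tau>) ?s"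
    by (simp add: put_price_def)
  finally show ?thesis .
qed

lemma put_boundary_bounds_of_capped_hinge_mean:
  fixes X :: "real \<Rightarrow> 'a \<Rightarrow> real"
  assumes M: "prob_space M" and X: "X \<tau> \<in> borel_measurable M"
    and \<tau>: "0 < \<tau>" and r: "0 < r" and K: "0 < K" and c: "0 < c" "c * sqrt \<tau> < 1"
    and mean: "c < exp (- r * \<tau>) * ((\<integral>\<omega>. capped_hinge c (X \<tau> \<omega> / sqrt \<tau>) \<partial>M) - \<epsilon>)"
    and payoff: "\<And>y. sqrt \<tau> * (capped_hinge c y - \<epsilon>)
                   \<le> max 0 (1 - (1 - c * sqrt \<tau>) * exp ((r - \<delta>) * \<tau> + sqrt \<tau> * y))"
  shows "0 < put_boundary M X r \<delta> K T (T - \<tau>) \<and> put_boundary M X r \<delta> K T (T - \<tau>) \<le> K * (1 - c * sqrt \<tau>)"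
proof -
  define s where "s = K * (1 - c * sqrt \<tau>)"
  have "0 \<le> s" using c K by (simp add: s_def)
  have "max 0 (K - s) = K * sqrt \<tau> * c" using K c \<tau> by (simp add: s_def algebra_simps)
  also have "\<dots> < exp (- r * \<tau>) * K * sqrt \<tau> * ((\<integral>\<omega>. capped_hinge c (X \<tau> \<omega> / sqrt \<tau>) \<partial>M) - \<epsilon>)"
    using mean K \<tau> by simp
  also have "\<dots> \<le> put_price M X r \<delta> K T (T - \<tau>) s"
    unfolding s_def using M X \<tau> K c payoff by (intro put_price_ge_capped_hinge_mean) auto
  finally have exercise: "max 0 (K - s) < put_price M X r \<delta> K T (T - \<tau>) s" .
  have "0 < K * (1 - exp (- r * \<tau>))" using r K \<tau> by simp
  also have "\<dots> \<le> put_boundary M X r \<delta> K T (T - \<tau>)"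
    using put_boundary_ge[OF M _ _ \<open>0 \<le> s\<close> exercise] X K by simp
  finally show ?thesis using put_boundary_le[OF \<open>0 \<le> s\<close> exercise] by (simp add: s_def)
qed

lemma filterlim_sqrt_at_right_0: "filterlim sqrt (at_right 0) (at_right (0::real))"
  by (auto simp: filterlim_at intro!: tendsto_eq_intros eventually_mono[OF eventually_at_right_less])

lemma levy_put_boundary_eventually_le:
  fixes X :: "real \<Rightarrow> 'a \<Rightarrow> real"
  assumes levy: "levy_process_triplet M X b \<sigma> \<nu>" and \<sigma>: "0 < \<sigma>"
    and r: "0 < r" and K: "0 < K" and c: "0 < c"
  shows "\<forall>\<^sub>F \<tau> in at_right 0. 0 < put_boundary M X r \<delta> K T (T - \<tau>)
                              \<and> put_boundary M X r \<delta> K T (T - \<tau>) \<le> K * (1 - c * sqrt \<tau>)"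
proof -
  have "prob_space M" and X: "\<And>s. 0 \<le> s \<Longrightarrow> X s \<in> borel_measurable M"
    using levy by (auto simp: levy_process_triplet_def levy_process_def)
  define Q where "Q \<tau> = (\<integral>\<omega>. capped_hinge c (X \<tau> \<omega> / sqrt \<tau>) \<partial>M)" for \<tau>
  define G where "G = (\<integral>x. capped_hinge c (\<sigma> * x) \<partial>std_normal_distribution)"
  define \<epsilon> where "\<epsilon> = (G - c) / 2"
  have "c < G" unfolding G_def using c \<sigma> by (rule std_normal_capped_hinge_mean_gt)
  then have \<epsilon>: "0 < \<epsilon>" by (simp add: \<epsilon>_def)
  have "((\<lambda>\<tau>. exp (- r * \<tau>) * (Q \<tau> - \<epsilon>)) \<longlongrightarrow> exp (- r * 0) * (G - \<epsilon>)) (at_right 0)"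
    unfolding Q_def G_def using c
    by (intro tendsto_intros levy_small_time_expectation[OF levy \<sigma>])
       (auto intro: abs_capped_hinge_le isCont_capped_hinge)
  moreover have "c < exp (- r * 0) * (G - \<epsilon>)" using \<open>c < G\<close> by (simp add: \<epsilon>_def field_simps)
  ultimately have mean: "\<forall>\<^sub>F \<tau> in at_right 0. c < exp (- r * \<tau>) * (Q \<tau> - \<epsilon>)"
    by (rule order_tendstoD)
  have payoff: "\<forall>\<^sub>F \<tau> in at_right 0. \<forall>y. sqrt \<tau> * (capped_hinge c y - \<epsilon>)
      \<le> max 0 (1 - (1 - c * sqrt \<tau>) * exp ((r - \<delta>) * (sqrt \<tau>)\<^sup>2 + sqrt \<tau> * y))"
    using eventually_capped_hinge_le_put_payoff[OF c \<epsilon>] filterlim_sqrt_at_right_0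
    by (rule eventually_compose_filterlim)
  have "((\<lambda>\<tau>. c * sqrt \<tau>) \<longlongrightarrow> c * sqrt 0) (at_right 0)" by (intro tendsto_intros)
  then have small: "\<forall>\<^sub>F \<tau> in at_right 0. c * sqrt \<tau> < 1" by (rule order_tendstoD) simp
  show ?thesis using mean payoff small eventually_at_right_less
  proof eventually_elim
    case (elim \<tau>)
    then show ?case unfolding Q_def
      using \<open>prob_space M\<close> X[of \<tau>] r K c
      by (intro put_boundary_bounds_of_capped_hinge_mean) auto
  qed
qed

lemma levy_d_pos_imp_less:
  assumes "0 < levy_d r \<delta> \<nu>"
  shows "\<delta> < r"
proof -
  have "0 \<le> enn2ereal (\<integral>\<^sup>+ z. ennreal (exp z - 1) * indicator {0<..} z \<partial>\<nu>)" by simp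
  then have "levy_d r \<delta> \<nu> \<le> ereal (r - \<delta>)"
    unfolding levy_d_def by (simp add: ereal_diff_le_self)
  with assms have "0 < ereal (r - \<delta>)" by (rule order.strict_trans2)
  then show ?thesis by simp
qed

theorem lemma4p5:
  fixes M :: "'a measure" and X :: "real \<Rightarrow> 'a \<Rightarrow> real"
    and b \<sigma> r \<delta> K T :: real and \<nu> :: "real measure"
  assumes levy: "levy_process_triplet M X b \<sigma> \<nu>"
    and r: "r \<ge> 0" and \<delta>: "\<delta> \<ge> 0" and K: "K > 0" and T: "T > 0"
    and cond_i: "\<sigma> \<noteq> 0 \<or> emeasure \<nu> {..<0} > 0
                 \<or> (\<integral>\<^sup>+ z. ennreal z * indicator {0<..1} z \<partial>\<nu>) = \<infinity>"
    and cond_ii: "\<sigma> \<noteq> 0 \<or> emeasure \<nu> {0<..} > 0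
                 \<or> (\<integral>\<^sup>+ z. ennreal \<bar>z\<bar> * indicator {-1..<0} z \<partial>\<nu>) = \<infinity>"
    and cond_iii_int: "(\<integral>\<^sup>+ z. ennreal (exp z) * indicator {1..} z \<partial>\<nu>) < \<infinity>"
    and cond_iii_b: "b = - \<sigma>\<^sup>2 / 2 - (\<integral>z. exp z - 1 - z * indicator {-1..1} z \<partial>\<nu>)"
    and \<sigma>_pos: "\<sigma> > 0"
    and d_pos: "levy_d r \<delta> \<nu> > 0"
  shows "filterlim
           (\<lambda>\<tau>. (K / put_boundary M X r \<delta> K T (T - \<tau>) - 1) / sqrt \<tau>)
           at_top (at_right 0)"
proof -
  have "0 < r" using levy_d_pos_imp_less[OF d_pos] \<delta> by simp
  show ?thesis
    unfolding filterlim_at_top_gt[where c = 0]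
  proof (intro allI impI)
    fix c :: real assume c: "0 < c"
    show "\<forall>\<^sub>F \<tau> in at_right 0. c \<le> (K / put_boundary M X r \<delta> K T (T - \<tau>) - 1) / sqrt \<tau>"
      using levy_put_boundary_eventually_le[where \<delta> = \<delta> and T = T, OF levy \<sigma>_pos \<open>0 < r\<close> K c]
        eventually_at_right_less[of "0::real"]
    proof eventually_elim
      case (elim \<tau>)
      let ?\<beta> = "put_boundary M X r \<delta> K T (T - \<tau>)"
      have "?\<beta> * (1 + c * sqrt \<tau>) \<le> K * (1 - c * sqrt \<tau>) * (1 + c * sqrt \<tau>)"
        using elim c by (intro mult_right_mono) auto
      also have "\<dots> \<le> K" using K by (simp add: algebra_simps power2_eq_square[symmetric])
      finally have "c * sqrt \<tau> \<le> K / ?\<beta> - 1" using elim by (simp add: field_simps)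
      then show ?case using elim by (simp add: pos_le_divide_eq mult.commute)
    qed
  qed
qed

end
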